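(* Let $m\geq 2$ and $n\geq 2$ be integers, let $G_m$ be a graph of order $m$ and $H_n$ a graph of order $n$. Then $rvc(G_m \diamond H_n) \geq rvc(G_m)$.
   Context: All graphs are finite, simple, connected and undirected; $d$ denotes graph distance. For a graph $G$ and $k\in\mathbb{N}$, a rainbow vertex $k$-coloring of $G$ is a map $c:V(G)\to\{1,\dots,k\}$ such that every two vertices $u,v$ are joined by a path whose internal vertices all receive distinct colors (a rainbow vertex path). The rainbow vertex connection number $rvc(G)$ is the least $k$ for which $G$ has a rainbow vertex $k$-coloring. For graphs $G_m$ (order $m$) and $H_n$ (order $n$) on disjoint vertex sets, the edge corona $G_m\diamond H_n$ is obtained from one copy of $G_m$ and $|E(G_m)|$ vertex-disjoint copies of $H_n$, one copy for each edge of $G_m$, by joining the two end vertices of the $j$-th edge of $G_m$ to every vertex of the $j$-th copy of $H_n$, for each $j\in\{1,\dots,|E(G_m)|\}$. *)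

theory Defs
  imports Main
begin

definition simple_graph :: "'a set \<Rightarrow> 'a set set \<Rightarrow> bool" where
  "simple_graph V E \<longleftrightarrow> finite V \<and>
     (\<forall>e\<in>E. \<exists>u v. u \<in> V \<and> v \<in> V \<and> u \<noteq> v \<and> e = {u, v})"

definition is_path :: "'a set \<Rightarrow> 'a set set \<Rightarrow> 'a list \<Rightarrow> bool" where
  "is_path V E p \<longleftrightarrow> p \<noteq> [] \<and> set p \<subseteq> V \<and> distinct p \<and>
     (\<forall>i. Suc i < length p \<longrightarrow> {p ! i, p ! Suc i} \<in> E)"

definition connected_graph :: "'a set \<Rightarrow> 'a set set \<Rightarrow> bool" where
  "connected_graph V E \<longleftrightarrow>
     (\<forall>u\<in>V. \<forall>v\<in>V. \<exists>p. is_path V E p \<and> hd p = u \<and> last p = v)"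

definition rainbow_vertex_path :: "('a \<Rightarrow> nat) \<Rightarrow> 'a list \<Rightarrow> bool" where
  "rainbow_vertex_path c p \<longleftrightarrow> distinct (map c (butlast (tl p)))"

definition rv_coloring :: "'a set \<Rightarrow> 'a set set \<Rightarrow> ('a \<Rightarrow> nat) \<Rightarrow> nat \<Rightarrow> bool" where
  "rv_coloring V E c k \<longleftrightarrow> (\<forall>v\<in>V. c v \<in> {1..k}) \<and>
     (\<forall>u\<in>V. \<forall>v\<in>V. \<exists>p. is_path V E p \<and> hd p = u \<and> last p = v \<and> rainbow_vertex_path c p)"

definition rvc :: "'a set \<Rightarrow> 'a set set \<Rightarrow> nat" where
  "rvc V E = (LEAST k. \<exists>c. rv_coloring V E c k)"

text \<open>Edge corona: vertices Inl v (v in G) and Inr (e, h) (copy of h for edge e of G).\<close>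
definition ecorona_V :: "'a set \<Rightarrow> 'a set set \<Rightarrow> 'b set \<Rightarrow> ('a + ('a set \<times> 'b)) set" where
  "ecorona_V VG EG VH = Inl ` VG \<union> Inr ` (EG \<times> VH)"

definition ecorona_E :: "'a set set \<Rightarrow> 'b set \<Rightarrow> 'b set set \<Rightarrow> ('a + ('a set \<times> 'b)) set set" where
  "ecorona_E EG VH EH =
     {{Inl u, Inl v} | u v. {u, v} \<in> EG}
   \<union> {{Inr (e, h), Inr (e, h')} | e h h'. e \<in> EG \<and> {h, h'} \<in> EH}
   \<union> {{Inl u, Inr (e, h)} | u e h. e \<in> EG \<and> u \<in> e \<and> h \<in> VH}"

end

(* Restricting a rainbow vertex colouring of the edge corona to the vertices of G gives one of G.
   Deleting from a rainbow path between two vertices of G all vertices of copies of H leaves a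
   path of G: a maximal run of deleted vertices lies in the copy of H attached to a single edge
   e = {a, b}, and it is entered and left through a and b, which are therefore adjacent. The
   internal vertices of the contracted path form a subsequence of those of the original one, so
   it is still rainbow. *)

theory Submission
  imports Defs
begin

lemma is_path_iff_successively:
  "is_path V E p \<longleftrightarrow>
     p \<noteq> [] \<and> set p \<subseteq> V \<and> distinct p \<and> successively (\<lambda>x y. {x, y} \<in> E) p"
  unfolding is_path_def successively_conv_nth by blast

lemma is_path_rev: "is_path V E (rev p) \<longleftrightarrow> is_path V E p"
  by (simp add: is_path_iff_successively insert_commute)

lemma is_path_Cons:
  assumes "p \<noteq> []"
  shows "is_path V E (x # p) \<longleftrightarrow> x \<in> V \<and> x \<notin> set p \<and> {x, hd p} \<in> E \<and> is_path V E p"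
  using assms by (auto simp: is_path_iff_successively successively_Cons)

lemma is_path_snoc:
  assumes "p \<noteq> []"
  shows "is_path V E (p @ [y]) \<longleftrightarrow> y \<in> V \<and> y \<notin> set p \<and> {last p, y} \<in> E \<and> is_path V E p"
proof -
  have "is_path V E (p @ [y]) \<longleftrightarrow> is_path V E (y # rev p)"
    by (metis is_path_rev rev.simps(2) rev_rev_ident)
  with assms show ?thesis by (simp add: is_path_Cons is_path_rev hd_rev insert_commute)
qed

lemma rvc_le: "rv_coloring V E c k \<Longrightarrow> rvc V E \<le> k"
  unfolding rvc_def by (blast intro: Least_le)

lemma rv_coloring_rvc: "rv_coloring V E c k \<Longrightarrow> \<exists>c'. rv_coloring V E c' (rvc V E)"
  unfolding rvc_def by (rule LeastI_ex) blast

lemma rv_coloring_card: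
  assumes "finite V" and "connected_graph V E"
  shows "\<exists>c. rv_coloring V E c (card V)"
proof -
  obtain h where h: "bij_betw h V {0..<card V}"
    using ex_bij_betw_finite_nat[OF assms(1)] by blast
  have inj: "inj_on (Suc \<circ> h) V"
    using h by (simp add: bij_betw_def comp_inj_on)
  have "rv_coloring V E (Suc \<circ> h) (card V)"
    unfolding rv_coloring_def
  proof (intro conjI ballI)
    fix v assume "v \<in> V"
    then show "(Suc \<circ> h) v \<in> {1..card V}" using h by (auto dest: bij_betw_apply)
  next
    fix u v assume "u \<in> V" "v \<in> V"
    then obtain p where p: "is_path V E p" "hd p = u" "last p = v"
      using assms(2) unfolding connected_graph_def by blast
    have "set (butlast (tl p)) \<subseteq> V" "distinct (butlast (tl p))"
      using p(1) unfolding is_path_def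
      by (auto simp: distinct_butlast distinct_tl dest!: in_set_butlastD intro: list.set_sel(2))
    then have "rainbow_vertex_path (Suc \<circ> h) p"
      unfolding rainbow_vertex_path_def using inj by (simp add: distinct_map inj_on_subset)
    with p show "\<exists>p. is_path V E p \<and> hd p = u \<and> last p = v \<and> rainbow_vertex_path (Suc \<circ> h) p"
      by blast
  qed
  then show ?thesis by blast
qed

lemma finite_ecorona_V:
  assumes "simple_graph VG EG" and "simple_graph VH EH"
  shows "finite (ecorona_V VG EG VH)"
proof -
  have "finite VG" "finite VH" "EG \<subseteq> Pow VG"
    using assms unfolding simple_graph_def by fast+
  then have "finite EG"
    by (meson finite_Pow_iff finite_subset)
  with \<open>finite VG\<close> \<open>finite VH\<close> show ?thesis
    unfolding ecorona_V_def by simp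
qed

lemma Inl_Inl_in_ecorona_E_iff: "{Inl u, Inl v} \<in> ecorona_E EG VH EH \<longleftrightarrow> {u, v} \<in> EG"
  unfolding ecorona_E_def by (auto simp: doubleton_eq_iff insert_commute)

lemma Inl_Inr_in_ecorona_E_iff:
  "{Inl u, Inr (e, h)} \<in> ecorona_E EG VH EH \<longleftrightarrow> e \<in> EG \<and> u \<in> e \<and> h \<in> VH"
  unfolding ecorona_E_def by (auto simp: doubleton_eq_iff)

lemma Inr_Inr_in_ecorona_E_imp_same_edge: "{Inr (e, h), Inr (e', h')} \<in> ecorona_E EG VH EH \<Longrightarrow> e' = e"
  unfolding ecorona_E_def by (auto simp: doubleton_eq_iff)

lemma ecorona_vertex_near_Inl:
  assumes "simple_graph VG EG" and "x \<in> ecorona_V VG EG VH"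
  obtains a where "a \<in> VG" and "x = Inl a \<or> \<not> isl x \<and> {x, Inl a} \<in> ecorona_E EG VH EH"
proof (cases x)
  case (Inl a)
  then show ?thesis using assms(2) that by (auto simp: ecorona_V_def)
next
  case (Inr b)
  then obtain e h where x: "x = Inr (e, h)" "e \<in> EG" "h \<in> VH"
    using assms(2) by (auto simp: ecorona_V_def)
  then obtain a b where "a \<in> VG" "e = {a, b}"
    using assms(1) unfolding simple_graph_def by blast
  with x that show ?thesis by (auto simp: insert_commute Inl_Inr_in_ecorona_E_iff)
qed

lemma is_path_map_Inl:
  "is_path VG EG p \<Longrightarrow> is_path (ecorona_V VG EG VH) (ecorona_E EG VH EH) (map Inl p)"
  by (auto simp: is_path_iff_successively successively_map distinct_map ecorona_V_def
      Inl_Inl_in_ecorona_E_iff)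

lemma connected_graph_ecorona:
  assumes "simple_graph VG EG" and "connected_graph VG EG"
  shows "connected_graph (ecorona_V VG EG VH) (ecorona_E EG VH EH)"
  unfolding connected_graph_def
proof (intro ballI)
  let ?V = "ecorona_V VG EG VH" and ?E = "ecorona_E EG VH EH"
  fix x y assume x: "x \<in> ?V" and y: "y \<in> ?V"
  show "\<exists>p. is_path ?V ?E p \<and> hd p = x \<and> last p = y"
  proof (cases "x = y")
    case True
    with x show ?thesis by (intro exI[of _ "[x]"]) (simp add: is_path_def)
  next
    case False
    obtain a where a: "a \<in> VG" "x = Inl a \<or> \<not> isl x \<and> {x, Inl a} \<in> ?E"
      using ecorona_vertex_near_Inl[OF assms(1) x] by blast
    obtain b where b: "b \<in> VG" "y = Inl b \<or> \<not> isl y \<and> {y, Inl b} \<in> ?E"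
      using ecorona_vertex_near_Inl[OF assms(1) y] by blast
    obtain p where p: "is_path VG EG p" "hd p = a" "last p = b"
      using assms(2) a b unfolding connected_graph_def by blast
    define q where "q = (if isl x then [] else [x]) @ map Inl p"
    have "p \<noteq> []" using p(1) by (simp add: is_path_def)
    then have q: "is_path ?V ?E q" "q \<noteq> []" "hd q = x" "last q = Inl b"
        "\<not> isl y \<Longrightarrow> y \<notin> set q"
      using a x p is_path_map_Inl[OF p(1), of VH EH] False
      by (auto simp: q_def is_path_Cons hd_map last_map)
    define r where "r = q @ (if isl y then [] else [y])"
    have "is_path ?V ?E r" "hd r = x" "last r = y"
      using q b y by (auto simp: r_def is_path_snoc insert_commute)
    then show ?thesis by blast
  qed
qed

definition lefts :: "('a + 'b) list \<Rightarrow> 'a list" where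
  "lefts xs = map projl (filter isl xs)"

lemma lefts_simps [simp]:
  "lefts [] = []"
  "lefts (Inl a # xs) = a # lefts xs"
  "lefts (Inr b # xs) = lefts xs"
  "lefts (xs @ ys) = lefts xs @ lefts ys"
  by (simp_all add: lefts_def)

lemma set_lefts: "set (lefts xs) = {a. Inl a \<in> set xs}"
  by (induction xs) (auto simp: lefts_def)

lemma distinct_lefts: "distinct xs \<Longrightarrow> distinct (lefts xs)"
proof (induction xs)
  case (Cons x xs)
  then show ?case by (cases x) (auto simp: set_lefts)
qed simp

lemma map_lefts: "map (c \<circ> Inl) (lefts xs) = map c (filter isl xs)"
  by (induction xs) (auto simp: lefts_def)

lemma hd_lefts: "p \<noteq> [] \<Longrightarrow> isl (hd p) \<Longrightarrow> hd (lefts p) = projl (hd p)"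
  by (cases p) (auto simp: isl_def)

lemma last_lefts: "p \<noteq> [] \<Longrightarrow> isl (last p) \<Longrightarrow> last (lefts p) = projl (last p)"
  by (induction p rule: rev_induct) (auto simp: isl_def)

lemma butlast_tl_lefts:
  assumes "isl (hd p)" and "isl (last p)"
  shows "butlast (tl (lefts p)) = lefts (butlast (tl p))"
proof (cases p rule: rev_cases)
  case (snoc q y)
  show ?thesis
  proof (cases q)
    case (Cons x r)
    with snoc assms show ?thesis by (auto simp: isl_def)
  qed (use snoc assms in \<open>auto simp: isl_def\<close>)
qed simp

(* Invariant for contracting a corona path: u is the last vertex of G seen before x. *)
definition attached :: "'a set set \<Rightarrow> 'a \<Rightarrow> 'a + 'a set \<times> 'b \<Rightarrow> bool" where
  "attached EG u x \<longleftrightarrow> (case x of Inl w \<Rightarrow> {u, w} \<in> EG | Inr (e, _) \<Rightarrow> e \<in> EG \<and> u \<in> e)"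

lemma attached_if_Inl_edge: "{Inl u, y} \<in> ecorona_E EG VH EH \<Longrightarrow> attached EG u y"
  by (cases y) (auto simp: attached_def Inl_Inl_in_ecorona_E_iff Inl_Inr_in_ecorona_E_iff)

lemma attached_Inr_step:
  assumes "simple_graph VG EG" and "attached EG u (Inr (e, h))"
    and "{Inr (e, h), y} \<in> ecorona_E EG VH EH" and "y \<noteq> Inl u"
  shows "attached EG u y"
proof (cases y)
  case (Inl w)
  have "e \<in> EG" "u \<in> e" "w \<in> e" "w \<noteq> u"
    using assms Inl by (auto simp: attached_def insert_commute Inl_Inr_in_ecorona_E_iff)
  moreover obtain a b where "e = {a, b}"
    using assms(1) \<open>e \<in> EG\<close> unfolding simple_graph_def by blast
  ultimately have "e = {u, w}" by auto
  with \<open>e \<in> EG\<close> Inl show ?thesis by (simp add: attached_def)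
next
  case (Inr b)
  with assms show ?thesis
    by (cases b) (auto simp: attached_def dest: Inr_Inr_in_ecorona_E_imp_same_edge)
qed

lemma successively_lefts_attached:
  assumes "simple_graph VG EG"
  shows "\<lbrakk>attached EG u x; successively (\<lambda>a b. {a, b} \<in> ecorona_E EG VH EH) (x # xs);
          distinct (x # xs); Inl u \<notin> set (x # xs); isl (last (x # xs))\<rbrakk>
         \<Longrightarrow> successively (\<lambda>a b. {a, b} \<in> EG) (u # lefts (x # xs))"
proof (induction xs arbitrary: u x)
  case Nil
  then show ?case by (cases x) (auto simp: attached_def)
next
  case (Cons y ys)
  have xy: "{x, y} \<in> ecorona_E EG VH EH"
    and chain: "successively (\<lambda>a b. {a, b} \<in> ecorona_E EG VH EH) (y # ys)"
    and dist: "distinct (y # ys)" "x \<notin> set (y # ys)"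
    and last: "isl (last (y # ys))"
    using Cons.prems(2,3,5) by simp_all
  show ?case
  proof (cases x)
    case (Inl w)
    have "Inl w \<notin> set (y # ys)" using dist(2) Inl by simp
    with xy chain dist(1) last Inl
    have "successively (\<lambda>a b. {a, b} \<in> EG) (w # lefts (y # ys))"
      by (intro Cons.IH attached_if_Inl_edge) simp_all
    with Cons.prems(1) Inl show ?thesis by (simp add: attached_def)
  next
    case (Inr b)
    then obtain e h where x: "x = Inr (e, h)" by (cases b) auto
    have "Inl u \<notin> set (y # ys)" using Cons.prems(4) by simp
    moreover from this have "attached EG u y"
      using attached_Inr_step[OF assms, of u e h y VH EH] Cons.prems(1) xy x by auto
    ultimately have "successively (\<lambda>a b. {a, b} \<in> EG) (u # lefts (y # ys))"
      using chain dist(1) last by (intro Cons.IH) simp_all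
    with x show ?thesis by simp
  qed
qed

lemma successively_lefts:
  assumes "simple_graph VG EG" and "successively (\<lambda>a b. {a, b} \<in> ecorona_E EG VH EH) p"
    and "distinct p" and "isl (hd p)" and "isl (last p)"
  shows "successively (\<lambda>a b. {a, b} \<in> EG) (lefts p)"
proof (cases p)
  case (Cons x xs)
  with assms(4) obtain u where x: "x = Inl u" by (cases x) auto
  show ?thesis
  proof (cases xs)
    case (Cons y ys)
    then have "attached EG u y"
      using assms(2) \<open>p = x # xs\<close> x by (auto intro: attached_if_Inl_edge)
    moreover have "successively (\<lambda>a b. {a, b} \<in> ecorona_E EG VH EH) (y # ys)"
      "distinct (y # ys)" "Inl u \<notin> set (y # ys)" "isl (last (y # ys))"
      using assms(2,3,5) \<open>p = x # xs\<close> x Cons by simp_all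
    ultimately have "successively (\<lambda>a b. {a, b} \<in> EG) (u # lefts (y # ys))"
      by (rule successively_lefts_attached[OF assms(1)])
    with \<open>p = x # xs\<close> x Cons show ?thesis by simp
  qed (simp add: \<open>p = x # xs\<close> x)
qed simp

lemma is_path_lefts:
  assumes "simple_graph VG EG" and "is_path (ecorona_V VG EG VH) (ecorona_E EG VH EH) p"
    and "isl (hd p)" and "isl (last p)"
  shows "is_path VG EG (lefts p)"
proof -
  have "p \<noteq> []" using assms(2) by (simp add: is_path_def)
  with assms(3) have "lefts p \<noteq> []" by (cases p) (auto simp: isl_def)
  moreover have "set (lefts p) \<subseteq> VG"
    using assms(2) by (auto simp: set_lefts is_path_def ecorona_V_def)
  moreover have "successively (\<lambda>a b. {a, b} \<in> EG) (lefts p)"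
    using assms by (intro successively_lefts) (auto simp: is_path_iff_successively)
  ultimately show ?thesis
    using assms(2) by (simp add: is_path_iff_successively distinct_lefts)
qed

lemma rainbow_vertex_path_lefts:
  assumes "rainbow_vertex_path c p" and "isl (hd p)" and "isl (last p)"
  shows "rainbow_vertex_path (c \<circ> Inl) (lefts p)"
  using assms distinct_map_filter[of c "butlast (tl p)" isl]
  by (simp add: rainbow_vertex_path_def butlast_tl_lefts map_lefts)

lemma rv_coloring_ecorona_restrict:
  assumes "simple_graph VG EG"
    and "rv_coloring (ecorona_V VG EG VH) (ecorona_E EG VH EH) c k"
  shows "rv_coloring VG EG (c \<circ> Inl) k"
  unfolding rv_coloring_def
proof (intro conjI ballI)
  fix v assume "v \<in> VG"
  with assms(2) show "(c \<circ> Inl) v \<in> {1..k}" by (simp add: rv_coloring_def ecorona_V_def)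
next
  fix u v assume "u \<in> VG" "v \<in> VG"
  then obtain p where p: "is_path (ecorona_V VG EG VH) (ecorona_E EG VH EH) p"
      "hd p = Inl u" "last p = Inl v" "rainbow_vertex_path c p"
    using assms(2) unfolding rv_coloring_def ecorona_V_def by blast
  have "p \<noteq> []" using p(1) by (simp add: is_path_def)
  with p have "is_path VG EG (lefts p)" "hd (lefts p) = u" "last (lefts p) = v"
      "rainbow_vertex_path (c \<circ> Inl) (lefts p)"
    by (simp_all add: is_path_lefts[OF assms(1)] hd_lefts last_lefts rainbow_vertex_path_lefts)
  then show "\<exists>q. is_path VG EG q \<and> hd q = u \<and> last q = v \<and> rainbow_vertex_path (c \<circ> Inl) q"
    by blast
qed

theorem theorem2:
  fixes VG :: "'a set" and EG :: "'a set set" and VH :: "'b set" and EH :: "'b set set"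
    and m n :: nat
  assumes "m \<ge> 2" and "n \<ge> 2"
    and "simple_graph VG EG" and "connected_graph VG EG" and "card VG = m"
    and "simple_graph VH EH" and "connected_graph VH EH" and "card VH = n"
  shows "rvc (ecorona_V VG EG VH) (ecorona_E EG VH EH) \<ge> rvc VG EG"
proof -
  let ?V = "ecorona_V VG EG VH" and ?E = "ecorona_E EG VH EH"
  have "finite ?V" using assms(3,6) by (rule finite_ecorona_V)
  moreover have "connected_graph ?V ?E" using assms(3,4) by (rule connected_graph_ecorona)
  \<comment> \<open>rvc is a LEAST, so some colouring of the corona has to exist first\<close>
  ultimately obtain c0 where "rv_coloring ?V ?E c0 (card ?V)"
    using rv_coloring_card by blast
  then obtain c where "rv_coloring ?V ?E c (rvc ?V ?E)"
    using rv_coloring_rvc by blast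
  then have "rv_coloring VG EG (c \<circ> Inl) (rvc ?V ?E)"
    by (rule rv_coloring_ecorona_restrict[OF assms(3)])
  then show ?thesis by (rule rvc_le)
qed

end
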